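(* For every $M>0$ there exists $\rho=\rho(M)\in(0,1)$ such that if $f:\mathbb D\to\mathbb D$ is analytic and $\sup_{z\in\mathbb D}\frac{(1-|z|^2)|f'(z)|}{1-|f(z)|^2}\ge\rho$, then $f(\mathbb D)$ contains a hyperbolic disc of hyperbolic radius $M$.
   Context: The hyperbolic distance on $\mathbb D$ is $d_h(z,w)=\frac12\log\frac{1+\rho(z,w)^2}{1-\rho(z,w)^2}$ with $\rho(z,w)=\big|\frac{z-w}{1-\overline wz}\big|$; a hyperbolic disc of hyperbolic radius $M$ is a set $\{w\in\mathbb D: d_h(w,a)<M\}$, $a\in\mathbb D$. *)

theory Defs
  imports "HOL-Complex_Analysis.Complex_Analysis"
begin

definition pseudo_hyp :: "complex \<Rightarrow> complex \<Rightarrow> real" where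
  "pseudo_hyp z w = cmod ((z - w) / (1 - cnj w * z))"

definition hyp_dist :: "complex \<Rightarrow> complex \<Rightarrow> real" where
  "hyp_dist z w = (1/2) * ln ((1 + (pseudo_hyp z w)\<^sup>2) / (1 - (pseudo_hyp z w)\<^sup>2))"

definition hyp_disc :: "complex \<Rightarrow> real \<Rightarrow> complex set" where
  "hyp_disc a M = {w \<in> ball 0 1. hyp_dist w a < M}"

end

theory Submission
  imports Defs
begin

(* The hyperbolic derivative (1 - |z|^2) |f'(z)| / (1 - |f z|^2) is invariant under disc automorphisms,
   so composing f with the automorphisms taking 0 to z0 and f z0 to 0 gives a self-map G of the disc
   with G 0 = 0 and |G'(0)| > a whenever the hyperbolic derivative of f at z0 exceeds a. By the Schwarz
   lemma G z = z h z with |h 0| > a, and the Schwarz-Pick lemma applied to h keeps |h| close to 1 on a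
   circle |z| = s once a is close to 1; so |G| > R on that circle and, G being an open map, G covers
   the disc of radius R about 0. The hyperbolic disc of radius M about 0 is the Euclidean disc of
   radius sqrt (tanh M), so R = sqrt (tanh M) and any rho strictly between a and 1 will do. *)

lemma tanh_artanh_real:
  fixes x :: real
  assumes "-1 < x" "x < 1"
  shows "tanh (artanh x) = x"
proof -
  have "- 2 * artanh x = ln ((1 - x) / (1 + x))"
    using assms by (simp add: artanh_def ln_div)
  then have exp_eq: "exp (- 2 * artanh x) = (1 - x) / (1 + x)"
    using assms by simp
  show ?thesis
    unfolding tanh_real_altdef exp_eq using assms by (simp add: field_simps)
qed

lemma Moebius_function_self_map:
  assumes "norm w < 1"
  shows "Moebius_function t w ` ball 0 1 \<subseteq> ball 0 1"
  using Moebius_function_norm_lt_1[OF assms] by auto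

lemma inj_on_Moebius_function:
  assumes "norm b < 1"
  shows "inj_on (Moebius_function 0 b) (ball 0 1)"
  by (rule inj_on_inverseI[where g = "Moebius_function 0 (- b)"])
    (use Moebius_function_compose[of "- b" b] assms in auto)

lemma Moebius_function_has_field_derivative:
  assumes "1 - cnj w * z \<noteq> 0"
  shows "(Moebius_function 0 w has_field_derivative (1 - cnj w * w) / (1 - cnj w * z)\<^sup>2) (at z)"
proof -
  have "Moebius_function 0 w = (\<lambda>z. (z - w) / (1 - cnj w * z))"
    by (simp add: fun_eq_iff Moebius_function_simple)
  then show ?thesis
    using assms by (auto intro!: derivative_eq_intros simp: algebra_simps power2_eq_square)
qed

lemma one_minus_cnj_mult_self: "1 - cnj w * w = of_real (1 - (norm w)\<^sup>2)"
  using complex_norm_square[of w] by (simp add: mult.commute)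

lemma norm_one_minus_cnj_mult_self:
  assumes "norm w < 1"
  shows "norm (1 - cnj w * w) = 1 - (norm w)\<^sup>2"
  unfolding one_minus_cnj_mult_self norm_of_real using assms by (simp add: power_le_one)

lemma norm_Moebius_function_eq_pseudo_hyp:
  "norm (Moebius_function 0 b w) = pseudo_hyp w b"
  by (simp add: pseudo_hyp_def Moebius_function_simple)

lemma hyp_dist_eq_artanh: "hyp_dist w b = artanh ((pseudo_hyp w b)\<^sup>2)"
  by (simp add: hyp_dist_def artanh_def)

lemma hyp_dist_less_iff:
  assumes "w \<in> ball 0 1" "b \<in> ball 0 1"
  shows "hyp_dist w b < M \<longleftrightarrow> (pseudo_hyp w b)\<^sup>2 < tanh M"
proof -
  have "pseudo_hyp w b < 1"
    using Moebius_function_norm_lt_1[of b w 0] assms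
    by (simp add: norm_Moebius_function_eq_pseudo_hyp)
  then have "(pseudo_hyp w b)\<^sup>2 < 1"
    by (simp add: pseudo_hyp_def power_less_one_iff abs_square_less_1)
  moreover have "-1 < (pseudo_hyp w b)\<^sup>2"
    using zero_le_power2[of "pseudo_hyp w b"] by linarith
  ultimately have "tanh (hyp_dist w b) = (pseudo_hyp w b)\<^sup>2"
    by (simp add: hyp_dist_eq_artanh tanh_artanh_real)
  then show ?thesis
    by (metis tanh_real_less_iff)
qed

lemma Moebius_function_image_hyp_disc:
  assumes "b \<in> ball 0 1"
  shows "Moebius_function 0 b ` hyp_disc b M \<subseteq> ball 0 (sqrt (tanh M))"
proof
  fix z assume "z \<in> Moebius_function 0 b ` hyp_disc b M"
  then obtain w where w: "w \<in> ball 0 1" "hyp_dist w b < M" and z: "z = Moebius_function 0 b w"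
    by (auto simp: hyp_disc_def)
  have "(norm z)\<^sup>2 < tanh M"
    using hyp_dist_less_iff[OF w(1) assms] w(2) by (simp add: z norm_Moebius_function_eq_pseudo_hyp)
  then show "z \<in> ball 0 (sqrt (tanh M))"
    using real_sqrt_less_mono by fastforce
qed

lemma hyp_disc_subset_if_Moebius_image:
  assumes b: "b \<in> ball 0 1" and S: "S \<subseteq> ball 0 1"
    and cover: "ball 0 (sqrt (tanh M)) \<subseteq> Moebius_function 0 b ` S"
  shows "hyp_disc b M \<subseteq> S"
proof
  fix w assume w: "w \<in> hyp_disc b M"
  then have "Moebius_function 0 b w \<in> Moebius_function 0 b ` S"
    using Moebius_function_image_hyp_disc[OF b] cover by blast
  moreover have "w \<in> ball 0 1"
    using w by (simp add: hyp_disc_def)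
  ultimately show "w \<in> S"
    using inj_on_image_mem_iff[OF inj_on_Moebius_function _ S] b by simp
qed

lemma ball_subset_image_if_far_on_sphere:
  fixes f :: "'a::heine_borel \<Rightarrow> 'b::real_normed_vector"
  assumes "0 < r" and contf: "continuous_on (cball \<xi> r) f" and openU: "open (f ` ball \<xi> r)"
    and far: "\<And>z. dist \<xi> z = r \<Longrightarrow> R \<le> dist (f \<xi>) (f z)"
  shows "ball (f \<xi>) R \<subseteq> f ` ball \<xi> r"
proof (rule ccontr)
  let ?U = "f ` ball \<xi> r"
  assume not_sub: "\<not> ball (f \<xi>) R \<subseteq> ?U"
  then have "0 < R"
    by (metis ball_eq_empty empty_subsetI linorder_not_le)
  then have "ball (f \<xi>) R \<inter> ?U \<noteq> {}"
    using \<open>0 < r\<close> by (metis IntI centre_in_ball empty_iff imageI)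
  then have "ball (f \<xi>) R \<inter> frontier ?U \<noteq> {}"
    using not_sub by (intro connected_Int_frontier connected_ball) auto
  then obtain p where p: "p \<in> ball (f \<xi>) R" "p \<in> closure ?U" "p \<notin> ?U"
    using openU by (auto simp: frontier_def interior_open)
  have "closed (f ` cball \<xi> r)"
    by (intro compact_imp_closed compact_continuous_image contf compact_cball)
  then have "closure ?U \<subseteq> f ` cball \<xi> r"
    by (intro closure_minimal image_mono ball_subset_cball)
  then obtain z where "z \<in> cball \<xi> r" "z \<notin> ball \<xi> r" "p = f z"
    using p by blast
  then have "R \<le> dist (f \<xi>) p"
    using far by simp
  with p(1) show False
    by simp
qed

lemma Schwarz_factorization:
  fixes G :: "complex \<Rightarrow> complex"
  assumes holG: "G holomorphic_on ball 0 1" and G_self: "G ` ball 0 1 \<subseteq> ball 0 1" and G0: "G 0 = 0"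
  obtains h where "h holomorphic_on ball 0 1" "\<And>w. norm w < 1 \<Longrightarrow> G w = w * h w"
    "deriv G 0 = h 0" "\<And>w. norm w < 1 \<Longrightarrow> norm (h w) \<le> 1"
proof -
  have G_disc: "norm (G w) < 1" if "norm w < 1" for w
    using G_self that by (auto simp: image_subset_iff)
  obtain h where holh: "h holomorphic_on ball 0 1" and G_eq: "\<And>w. norm w < 1 \<Longrightarrow> G w = w * h w"
    and h0: "deriv G 0 = h 0"
    using Schwarz3[OF holG G0] by metis
  have "norm (h w) \<le> 1" if "norm w < 1" for w
  proof (cases "w = 0")
    case True
    then show ?thesis
      using Schwarz_Lemma(2)[OF holG G0 G_disc, of 0] h0 by simp
  next
    case False
    then show ?thesis
      using Schwarz_Lemma(1)[OF holG G0 G_disc that] G_eq[OF that] by (simp add: norm_mult)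
  qed
  with that holh G_eq h0 show ?thesis
    by blast
qed

lemma one_minus_norm_sq_le_if_Moebius_le:
  fixes w :: complex and a t :: real
  assumes w: "norm w < 1" and a: "0 \<le> a" "a < 1" and t: "t < 1"
    and Moeb: "norm (Moebius_function 0 a w) \<le> t"
  shows "1 - (norm w)\<^sup>2 \<le> (1 - a\<^sup>2) / (1 - a * t)\<^sup>2"
proof -
  define u where "u = Moebius_function 0 a w"
  have a_sq: "0 < 1 - a\<^sup>2"
    using a by (simp add: abs_square_less_1)
  have "norm (a * w) < 1"
    using w a mult_left_le_one_le[of "norm w" a] by (simp add: norm_mult)
  then have "1 - a * w \<noteq> 0"
    by auto
  then have prod: "(1 + a * u) * (1 - a * w) = of_real (1 - a\<^sup>2)"
    by (simp add: u_def Moebius_function_simple field_simps power2_eq_square)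
  have norm_prod: "norm (1 + a * u) * norm (1 - a * w) = 1 - a\<^sup>2"
    using a_sq by (simp only: prod norm_of_real flip: norm_mult)
  have at_pos: "0 < 1 - a * t"
    using a t Moeb mult_left_le_one_le[of t a] by (smt (verit) norm_ge_zero)
  have "1 - a * t \<le> norm (1 + a * u)"
  proof -
    have "a * norm u \<le> a * t"
      using Moeb a by (simp add: u_def mult_left_mono)
    then show ?thesis
      using norm_triangle_ineq2[of 1 "- (a * u)"] a by (simp add: norm_mult)
  qed
  then have "norm (1 - a * w) * (1 - a * t) \<le> 1 - a\<^sup>2"
    by (metis norm_prod mult.commute mult_left_mono norm_ge_zero)
  then have bound: "norm (1 - a * w) \<le> (1 - a\<^sup>2) / (1 - a * t)"
    using at_pos by (simp add: field_simps)
  have "(norm (1 - a * w))\<^sup>2 - (norm (w - a))\<^sup>2 = (1 - a\<^sup>2) * (1 - (norm w)\<^sup>2)"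
    unfolding cmod_power2 by (simp add: power2_eq_square algebra_simps)
  then have "1 - (norm w)\<^sup>2 \<le> (norm (1 - a * w))\<^sup>2 / (1 - a\<^sup>2)"
    using a_sq by (simp add: field_simps)
  also have "\<dots> \<le> ((1 - a\<^sup>2) / (1 - a * t))\<^sup>2 / (1 - a\<^sup>2)"
    using a_sq bound by (intro divide_right_mono power_mono) auto
  also have "\<dots> = (1 - a\<^sup>2) / (1 - a * t)\<^sup>2"
    using a_sq by (simp add: power2_eq_square)
  finally show ?thesis .
qed

lemma one_minus_norm_sq_le_of_self_map:
  fixes k :: "complex \<Rightarrow> complex" and a :: real
  assumes holk: "k holomorphic_on ball 0 1" and k_self: "k ` ball 0 1 \<subseteq> ball 0 1"
    and k0: "k 0 = of_real a" and a: "0 \<le> a" "a < 1" and z: "norm z < 1"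
  shows "1 - (norm (k z))\<^sup>2 \<le> (1 - a\<^sup>2) / (1 - a * norm z)\<^sup>2"
proof -
  define u where "u = Moebius_function 0 a \<circ> k"
  have a_disc: "norm (of_real a :: complex) < 1"
    using a by simp
  have k_disc: "norm (k w) < 1" if "norm w < 1" for w
    using k_self that by (auto simp: image_subset_iff)
  have "u holomorphic_on ball 0 1"
    unfolding u_def using k_self
    by (intro holomorphic_on_compose_gen[OF holk Moebius_function_holomorphic[OF a_disc]])
  moreover have "u 0 = 0"
    by (simp add: u_def k0 Moebius_function_eq_zero)
  moreover have "norm (u w) < 1" if "norm w < 1" for w
    unfolding u_def using Moebius_function_norm_lt_1[OF a_disc k_disc[OF that]] by simp
  ultimately have "norm (u z) \<le> norm z"
    using Schwarz_Lemma(1)[of u z] z by blast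
  then show ?thesis
    using one_minus_norm_sq_le_if_Moebius_le[OF k_disc[OF z] a z] by (simp add: u_def)
qed

lemma norm_self_map_lower_bound:
  fixes G :: "complex \<Rightarrow> complex" and a :: real
  assumes holG: "G holomorphic_on ball 0 1" and G_self: "G ` ball 0 1 \<subseteq> ball 0 1"
    and G0: "G 0 = 0" and a: "0 \<le> a" "a < norm (deriv G 0)" and z: "norm z < 1"
  shows "(norm z)\<^sup>2 * (1 - (1 - a\<^sup>2) / (1 - a * norm z)\<^sup>2) \<le> (norm (G z))\<^sup>2"
proof -
  obtain h where holh: "h holomorphic_on ball 0 1" and G_eq: "\<And>w. norm w < 1 \<Longrightarrow> G w = w * h w"
    and h0: "deriv G 0 = h 0" and h_le: "\<And>w. norm w < 1 \<Longrightarrow> norm (h w) \<le> 1"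
    using Schwarz_factorization[OF holG G_self G0] by metis
  have a_lt_1: "a < 1"
    using a h_le[of 0] h0 by simp
  \<comment> \<open>Rescaling by c turns h into a map into the open disc that takes 0 to the real number a.\<close>
  define c where "c = of_real a / h 0"
  have c: "norm c < 1"
    using a h0 by (simp add: c_def norm_divide divide_less_eq)
  have k_le: "norm (c * h w) \<le> norm (h w)" if "norm w < 1" for w
    using c mult_left_le_one_le[of "norm (h w)" "norm c"] by (simp add: norm_mult)
  have k_disc: "norm (c * h w) < 1" if "norm w < 1" for w
    using c h_le[OF that] mult_left_le[of "norm (h w)" "norm c"] by (simp add: norm_mult)
  have "1 - (norm (c * h z))\<^sup>2 \<le> (1 - a\<^sup>2) / (1 - a * norm z)\<^sup>2"
  proof (rule one_minus_norm_sq_le_of_self_map[OF _ _ _ a(1) a_lt_1 z])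
    show "(\<lambda>w. c * h w) holomorphic_on ball 0 1"
      by (intro holomorphic_intros holh)
    show "(\<lambda>w. c * h w) ` ball 0 1 \<subseteq> ball 0 1"
      using k_disc by auto
    have "h 0 \<noteq> 0"
      using a h0 by auto
    then show "c * h 0 = of_real a"
      by (simp add: c_def)
  qed
  then have "(norm z)\<^sup>2 * (1 - (1 - a\<^sup>2) / (1 - a * norm z)\<^sup>2) \<le> (norm z)\<^sup>2 * (norm (c * h z))\<^sup>2"
    by (intro mult_left_mono) auto
  also have "\<dots> \<le> (norm z)\<^sup>2 * (norm (h z))\<^sup>2"
    using k_le[OF z] by (intro mult_left_mono power_mono) auto
  also have "\<dots> = (norm (G z))\<^sup>2"
    by (simp add: G_eq[OF z] norm_mult power_mult_distrib)
  finally show ?thesis .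
qed

lemma self_map_covers_ball:
  fixes G :: "complex \<Rightarrow> complex" and a s R :: real
  assumes holG: "G holomorphic_on ball 0 1" and G_self: "G ` ball 0 1 \<subseteq> ball 0 1"
    and G0: "G 0 = 0" and a: "0 \<le> a" "a < norm (deriv G 0)" and s: "0 < s" "s < 1"
    and R: "R\<^sup>2 \<le> s\<^sup>2 * (1 - (1 - a\<^sup>2) / (1 - a * s)\<^sup>2)"
  shows "ball 0 R \<subseteq> G ` ball 0 1"
proof -
  have "continuous_on (cball 0 s) G"
    using s by (intro holomorphic_on_imp_continuous_on holomorphic_on_subset[OF holG]) auto
  moreover have "(G has_field_derivative deriv G 0) (at 0)"
    using holG by (intro holomorphic_derivI) auto
  then have "\<not> G constant_on ball 0 1"
    using a by (intro nonzero_deriv_nonconstant) auto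
  then have "open (G ` ball 0 s)"
    using s by (intro open_mapping_thm[OF holG]) auto
  moreover have "R \<le> dist (G 0) (G z)" if "dist 0 z = s" for z
  proof -
    have "norm z = s"
      using that by simp
    then have "R\<^sup>2 \<le> (norm (G z))\<^sup>2"
      using R norm_self_map_lower_bound[OF holG G_self G0 a, of z] s by simp
    then show ?thesis
      using power2_le_imp_le[OF _ norm_ge_zero] G0 by simp
  qed
  ultimately have "ball (G 0) R \<subseteq> G ` ball 0 s"
    by (rule ball_subset_image_if_far_on_sphere[OF s(1)])
  moreover have "G ` ball 0 s \<subseteq> G ` ball 0 1"
    using s by (intro image_mono subset_ball) simp
  ultimately show ?thesis
    using G0 by simp
qed

lemma self_map_covers_ball_if_deriv_gt:
  fixes R :: real
  assumes R: "0 < R" "R < 1"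
  obtains a where "0 \<le> a" "a < 1"
    "\<And>G. G holomorphic_on ball 0 1 \<Longrightarrow> G ` ball 0 1 \<subseteq> ball 0 1 \<Longrightarrow> G 0 = 0 \<Longrightarrow>
      a < norm (deriv G 0) \<Longrightarrow> ball 0 R \<subseteq> G ` ball 0 1"
proof -
  define s where "s = (1 + R) / 2"
  have s: "0 < s" "s < 1" "R < s"
    using R by (auto simp: s_def)
  define \<delta> where "\<delta> = (1 - s)\<^sup>2 * (1 - R\<^sup>2 / s\<^sup>2)"
  have R_s: "R\<^sup>2 / s\<^sup>2 < 1"
    using s R by (simp add: power_strict_mono)
  have "\<delta> \<le> (1 - s)\<^sup>2"
    unfolding \<delta>_def by (intro mult_left_le) auto
  also have "\<dots> < 1"
    using s by (simp add: abs_square_less_1)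
  finally have \<delta>: "0 < \<delta>" "\<delta> < 1"
    using s R_s by (simp_all add: \<delta>_def)
  define a where "a = sqrt (1 - \<delta>)"
  have a: "0 \<le> a" "a < 1" "1 - a\<^sup>2 = \<delta>"
    using \<delta> by (auto simp: a_def)
  have "0 < 1 - s" "1 - s \<le> 1 - a * s"
    using a s by (simp_all add: mult_left_le_one_le)
  then have "(1 - s)\<^sup>2 \<le> (1 - a * s)\<^sup>2" "0 < (1 - a * s)\<^sup>2 * (1 - s)\<^sup>2"
    by (simp_all add: power_mono)
  then have "(1 - a\<^sup>2) / (1 - a * s)\<^sup>2 \<le> \<delta> / (1 - s)\<^sup>2"
    using divide_left_mono[of "(1 - s)\<^sup>2" "(1 - a * s)\<^sup>2" \<delta>] a(3) \<delta> by simp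
  also have "\<dots> = 1 - R\<^sup>2 / s\<^sup>2"
    using s by (simp add: \<delta>_def)
  finally have "R\<^sup>2 / s\<^sup>2 \<le> 1 - (1 - a\<^sup>2) / (1 - a * s)\<^sup>2"
    by simp
  then have "R\<^sup>2 \<le> s\<^sup>2 * (1 - (1 - a\<^sup>2) / (1 - a * s)\<^sup>2)"
    using s by (simp add: divide_le_eq mult.commute)
  from that[OF a(1,2) self_map_covers_ball[OF _ _ _ a(1) _ s(1,2) this]] show ?thesis .
qed

definition disc_recentre :: "(complex \<Rightarrow> complex) \<Rightarrow> complex \<Rightarrow> complex \<Rightarrow> complex" where
  "disc_recentre f z0 = Moebius_function 0 (f z0) \<circ> f \<circ> Moebius_function 0 (- z0)"

lemma disc_recentre_0: "disc_recentre f z0 0 = 0"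
  by (simp add: disc_recentre_def Moebius_function_of_zero Moebius_function_eq_zero)

context
  fixes f :: "complex \<Rightarrow> complex" and z0 :: complex
  assumes f_self: "f ` ball 0 1 \<subseteq> ball 0 1" and z0: "z0 \<in> ball 0 1"
begin

lemma disc_recentre_image: "disc_recentre f z0 ` ball 0 1 \<subseteq> Moebius_function 0 (f z0) ` f ` ball 0 1"
  using Moebius_function_self_map[of "- z0" 0] z0 by (auto simp: disc_recentre_def)

lemma hyp_disc_subset_image_if_disc_recentre_covers:
  assumes "ball 0 (sqrt (tanh M)) \<subseteq> disc_recentre f z0 ` ball 0 1"
  shows "hyp_disc (f z0) M \<subseteq> f ` ball 0 1"
proof (rule hyp_disc_subset_if_Moebius_image)
  show "f z0 \<in> ball 0 1"
    using f_self z0 by blast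
  show "ball 0 (sqrt (tanh M)) \<subseteq> Moebius_function 0 (f z0) ` f ` ball 0 1"
    using assms disc_recentre_image by (rule order_trans)
qed (use f_self in blast)

context
  assumes holf: "f holomorphic_on ball 0 1"
begin

lemma disc_recentre_holomorphic_self_map:
  "disc_recentre f z0 holomorphic_on ball 0 1" "disc_recentre f z0 ` ball 0 1 \<subseteq> ball 0 1"
proof -
  have z0_disc: "norm (- z0) < 1" and fz0_disc: "norm (f z0) < 1"
    using f_self z0 by (auto simp: image_subset_iff)
  have f\<psi>_self: "(f \<circ> Moebius_function 0 (- z0)) ` ball 0 1 \<subseteq> ball 0 1"
    unfolding image_comp[symmetric]
    using image_mono[OF Moebius_function_self_map[OF z0_disc], of f] f_self by (rule order_trans)
  have "f \<circ> Moebius_function 0 (- z0) holomorphic_on ball 0 1"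
    using Moebius_function_holomorphic[OF z0_disc] holf Moebius_function_self_map[OF z0_disc]
    by (rule holomorphic_on_compose_gen)
  then show "disc_recentre f z0 holomorphic_on ball 0 1"
    unfolding disc_recentre_def comp_assoc
    using Moebius_function_holomorphic[OF fz0_disc] f\<psi>_self by (rule holomorphic_on_compose_gen)
  have "Moebius_function 0 (f z0) ` (f \<circ> Moebius_function 0 (- z0)) ` ball 0 1 \<subseteq> ball 0 1"
    using image_mono[OF f\<psi>_self] Moebius_function_self_map[OF fz0_disc] by (rule order_trans)
  then show "disc_recentre f z0 ` ball 0 1 \<subseteq> ball 0 1"
    by (simp add: disc_recentre_def image_comp comp_assoc)
qed

lemma norm_deriv_disc_recentre_0:
  "norm (deriv (disc_recentre f z0) 0) = (1 - (norm z0)\<^sup>2) * norm (deriv f z0) / (1 - (norm (f z0))\<^sup>2)"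
proof -
  have z0_disc: "norm z0 < 1" and fz0_disc: "norm (f z0) < 1"
    using f_self z0 by (auto simp: image_subset_iff)
  have \<psi>0: "Moebius_function 0 (- z0) 0 = z0"
    by (simp add: Moebius_function_of_zero)
  have "(Moebius_function 0 (- z0) has_field_derivative (1 - cnj z0 * z0)) (at 0)"
    using Moebius_function_has_field_derivative[of "- z0" 0] by simp
  moreover have "(f has_field_derivative deriv f z0) (at (Moebius_function 0 (- z0) 0))"
    using holomorphic_derivI[OF holf _ z0] by (simp add: \<psi>0)
  ultimately have "(f \<circ> Moebius_function 0 (- z0) has_field_derivative
      deriv f z0 * (1 - cnj z0 * z0)) (at 0)"
    by (rule DERIV_chain[rotated])
  moreover have "(norm (f z0))\<^sup>2 < 1"
    using fz0_disc by (simp add: abs_square_less_1)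
  then have "1 - cnj (f z0) * f z0 \<noteq> 0"
    unfolding one_minus_cnj_mult_self of_real_eq_0_iff by simp
  then have "(Moebius_function 0 (f z0) has_field_derivative 1 / (1 - cnj (f z0) * f z0))
      ((at ((f \<circ> Moebius_function 0 (- z0)) 0)))"
    using Moebius_function_has_field_derivative[of "f z0" "f z0"] by (simp add: \<psi>0 power2_eq_square)
  ultimately have "(disc_recentre f z0 has_field_derivative
      1 / (1 - cnj (f z0) * f z0) * (deriv f z0 * (1 - cnj z0 * z0))) (at 0)"
    unfolding disc_recentre_def comp_assoc by (rule DERIV_chain[rotated])
  then have "deriv (disc_recentre f z0) 0 = 1 / (1 - cnj (f z0) * f z0) * (deriv f z0 * (1 - cnj z0 * z0))"
    by (rule DERIV_imp_deriv)
  then show ?thesis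
    by (simp only: norm_mult norm_divide norm_one norm_one_minus_cnj_mult_self[OF fz0_disc]
        norm_one_minus_cnj_mult_self[OF z0_disc]) simp
qed

end

end

theorem mainTheorem12:
  fixes M :: real
  assumes "M > 0"
  shows "\<exists>\<rho>::real. 0 < \<rho> \<and> \<rho> < 1 \<and>
    (\<forall>f. f holomorphic_on ball 0 1 \<longrightarrow> f ` ball 0 1 \<subseteq> ball 0 1 \<longrightarrow>
      (SUP z\<in>ball 0 1. ereal ((1 - (cmod z)\<^sup>2) * cmod (deriv f z) / (1 - (cmod (f z))\<^sup>2))) \<ge> ereal \<rho> \<longrightarrow>
      (\<exists>a \<in> ball 0 1. hyp_disc a M \<subseteq> f ` ball 0 1))"
proof -
  have R: "0 < sqrt (tanh M)" "sqrt (tanh M) < 1"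
    using assms tanh_real_lt_1[of M] by auto
  obtain a where a: "0 \<le> a" "a < 1" and covers: "\<And>G. G holomorphic_on ball 0 1 \<Longrightarrow>
      G ` ball 0 1 \<subseteq> ball 0 1 \<Longrightarrow> G 0 = 0 \<Longrightarrow> a < norm (deriv G 0) \<Longrightarrow>
      ball 0 (sqrt (tanh M)) \<subseteq> G ` ball 0 1"
    using self_map_covers_ball_if_deriv_gt[OF R] by blast
  show ?thesis
  proof (intro exI[of _ "(1 + a) / 2"] conjI allI impI)
    fix f :: "complex \<Rightarrow> complex"
    assume holf: "f holomorphic_on ball 0 1" and f_self: "f ` ball 0 1 \<subseteq> ball 0 1"
      and sup: "ereal ((1 + a) / 2) \<le> (SUP z\<in>ball 0 1. ereal ((1 - (cmod z)\<^sup>2) * cmod (deriv f z) / (1 - (cmod (f z))\<^sup>2)))"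
    obtain z0 where z0: "z0 \<in> ball 0 1"
      and "a < (1 - (cmod z0)\<^sup>2) * cmod (deriv f z0) / (1 - (cmod (f z0))\<^sup>2)"
      using less_le_trans[OF _ sup, of "ereal a"] a by (auto simp: less_SUP_iff)
    then have "a < norm (deriv (disc_recentre f z0) 0)"
      by (simp add: norm_deriv_disc_recentre_0[OF f_self _ holf])
    then have "ball 0 (sqrt (tanh M)) \<subseteq> disc_recentre f z0 ` ball 0 1"
      using covers disc_recentre_holomorphic_self_map[OF f_self z0 holf] disc_recentre_0 by blast
    then have "hyp_disc (f z0) M \<subseteq> f ` ball 0 1"
      by (rule hyp_disc_subset_image_if_disc_recentre_covers[OF f_self z0])
    moreover have fz0: "f z0 \<in> ball 0 1"
      using f_self z0 by blast
    ultimately show "\<exists>b\<in>ball 0 1. hyp_disc b M \<subseteq> f ` ball 0 1"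
      by blast
  qed (use a in auto)
qed

end
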